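(* For every integer $n\ge4$, $\mathcal D(n)>\mathcal P(n)$, where $\mathcal D(n)=2^4\cdot3^{(n-4)/2}$ for $n$ even, $\mathcal D(n)=2^5\cdot3^{(n-5)/2}$ for $n$ odd, and $\mathcal P(n)$ is the number of unordered pairs $\{\xi,\eta\}$ of partitions with $|\xi|+|\eta|=n$, where each pair with $\xi=\eta$ is counted twice (i.e. $\mathcal P(n)$ is the number of irreducible complex representations of the Weyl group of type $D_n$). *)

theory Defs
  imports Main "HOL-Library.Multiset"
begin

definition is_partition :: "nat multiset \<Rightarrow> nat \<Rightarrow> bool" where
  "is_partition \<xi> k \<longleftrightarrow> (\<forall>x\<in>#\<xi>. 0 < x) \<and> sum_mset \<xi> = k"

definition partitions_of :: "nat \<Rightarrow> nat multiset set" where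
  "partitions_of k = {\<xi>. is_partition \<xi> k}"

text \<open>Unordered pairs are represented as
  sets {xi, eta} (a singleton when xi = eta); the second summand counts the
  diagonal pairs a second time.\<close>
definition Pcount :: "nat \<Rightarrow> nat" where
  "Pcount n = card {{\<xi>, \<eta>} | \<xi> \<eta>. \<exists>a b. a + b = n \<and> is_partition \<xi> a \<and> is_partition \<eta> b}
            + card {\<xi>. \<exists>a. a + a = n \<and> is_partition \<xi> a}"

definition Dbound :: "nat \<Rightarrow> nat" where
  "Dbound n = (if even n then 2^4 * 3^((n - 4) div 2) else 2^5 * 3^((n - 5) div 2))"

end

theory Submission
  imports Defs "HOL-Library.Multiset_Order"
begin

(* Write p(k) for the number of partitions of k and
   B(n) = sum_{a <= n} p(a) p(n - a) for the number of ordered pairs (xi, eta) with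
   |xi| + |eta| = n.  The proof has three ingredients.
   (1) Counting: the unordered pairs are the images of the ordered pairs (xi, eta)
       with xi <= eta (for a linear order on multisets), hence
       2 P(n) <= B(n) + 3 d(n), where d(n) = p(n/2) counts the diagonal pairs.
   (2) Growth of p: adding a part 1 shows p(k) <= p(k+1); removing the smallest part s
       of a partition of k+2 without part 1 and adding s-2 parts 1 injects these
       partitions into those of k, so p(k+2) <= p(k+1) + p(k).  Consequently
       B(n+2) <= B(n+1) + B(n) + p(n+2), and G(n) = B(n) + 8 (p(n) + p(n-1))
       satisfies G(n+2) <= 3 G(n), exactly the growth factor of D(n+2) = 3 D(n).
   (3) Evaluation: p is computed by the recursion for partitions with bounded parts;
       this settles 4 <= n <= 14 directly and G(n) <= D(n) for n = 15, 16, from which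
       induction gives G(n) <= D(n) for all n >= 15. *)

section \<open>Partitions with bounded parts and an executable partition count\<close>

definition bounded_partitions :: "nat \<Rightarrow> nat \<Rightarrow> nat multiset set" where
  "bounded_partitions k m = {\<xi>. is_partition \<xi> k \<and> (\<forall>x\<in>#\<xi>. x \<le> m)}"

text \<open>Their number, by the classical recursion on the largest admissible part:
  a partition with parts \<open>\<le> m + 1\<close> either avoids \<open>m + 1\<close> or arises from a partition of
  \<open>k - (m + 1)\<close> by adding a part \<open>m + 1\<close>.\<close>
fun bounded_partition_count :: "nat \<Rightarrow> nat \<Rightarrow> nat" where
  "bounded_partition_count k 0 = (if k = 0 then 1 else 0)"
| "bounded_partition_count k (Suc m) = bounded_partition_count k m +
     (if Suc m \<le> k then bounded_partition_count (k - Suc m) (Suc m) else 0)"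

lemma bounded_partitions_0: "bounded_partitions k 0 = (if k = 0 then {{#}} else {})"
proof -
  have "\<xi> \<in> bounded_partitions k 0 \<longleftrightarrow> k = 0 \<and> \<xi> = {#}" for \<xi>
    unfolding bounded_partitions_def is_partition_def by (cases \<xi>) auto
  then show ?thesis by auto
qed

lemma bounded_partitions_Suc:
  "bounded_partitions k (Suc m) = bounded_partitions k m \<union>
     (if Suc m \<le> k then add_mset (Suc m) ` bounded_partitions (k - Suc m) (Suc m) else {})"
proof (intro equalityI subsetI)
  fix \<xi> assume \<xi>: "\<xi> \<in> bounded_partitions k (Suc m)"
  show "\<xi> \<in> bounded_partitions k m \<union>
     (if Suc m \<le> k then add_mset (Suc m) ` bounded_partitions (k - Suc m) (Suc m) else {})"
  proof (cases "Suc m \<in># \<xi>")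
    case True
    define \<zeta> where "\<zeta> = \<xi> - {#Suc m#}"
    have \<xi>_eq: "\<xi> = add_mset (Suc m) \<zeta>" using True by (simp add: \<zeta>_def)
    with \<xi> have "Suc m + sum_mset \<zeta> = k" "\<forall>x\<in>#\<zeta>. 0 < x \<and> x \<le> Suc m"
      by (auto simp: bounded_partitions_def is_partition_def)
    then have "Suc m \<le> k" "\<zeta> \<in> bounded_partitions (k - Suc m) (Suc m)"
      by (auto simp: bounded_partitions_def is_partition_def)
    then show ?thesis using \<xi>_eq by auto
  next
    case False
    with \<xi> show ?thesis by (auto simp: bounded_partitions_def le_Suc_eq)
  qed
qed (auto simp: bounded_partitions_def is_partition_def split: if_splits)

lemma card_bounded_partitions:
  "finite (bounded_partitions k m) \<and> card (bounded_partitions k m) = bounded_partition_count k m"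
proof (induction k m rule: bounded_partition_count.induct)
  case (1 k)
  then show ?case by (simp add: bounded_partitions_0)
next
  case (2 k m)
  show ?case
  proof (cases "Suc m \<le> k")
    case False
    then show ?thesis using 2 bounded_partitions_Suc[of k m] by simp
  next
    case True
    let ?new = "add_mset (Suc m) ` bounded_partitions (k - Suc m) (Suc m)"
    have "card ?new = bounded_partition_count (k - Suc m) (Suc m)"
      using 2(2) True by (simp add: card_image inj_on_def)
    moreover have "bounded_partitions k m \<inter> ?new = {}"
      by (auto simp: bounded_partitions_def)
    ultimately show ?thesis using 2 True bounded_partitions_Suc[of k m]
      by (simp add: card_Un_disjoint)
  qed
qed

lemma part_le_weight: "x \<in># \<xi> \<Longrightarrow> x \<le> sum_mset (\<xi> :: nat multiset)"
  by (induction \<xi>) auto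

lemma partitions_of_eq_bounded: "partitions_of k = bounded_partitions k k"
  by (auto simp: partitions_of_def bounded_partitions_def is_partition_def part_le_weight)

lemma finite_partitions_of: "finite (partitions_of k)"
  using card_bounded_partitions by (simp add: partitions_of_eq_bounded)

definition npart :: "nat \<Rightarrow> nat" where
  "npart k = card (partitions_of k)"

lemma npart_code [code]: "npart k = bounded_partition_count k k"
  using card_bounded_partitions by (simp add: npart_def partitions_of_eq_bounded)

lemma npart_values:
  "npart 0 = 1" "npart 1 = 1" "npart 2 = 2" "npart 3 = 3" "npart 4 = 5" "npart 5 = 7"
  "npart 6 = 11" "npart 7 = 15" "npart 8 = 22" "npart 9 = 30" "npart 10 = 42" "npart 11 = 56"
  "npart 12 = 77" "npart 13 = 101" "npart 14 = 135" "npart 15 = 176" "npart 16 = 231"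
  by code_simp+

text \<open>\<open>p(1)\<close> in the form produced by the simplifier.\<close>
lemma npart_Suc_0: "npart (Suc 0) = 1"
  using npart_values(2) by simp

section \<open>Growth of the partition function\<close>

lemma partitions_with_one:
  "{\<xi> \<in> partitions_of (Suc k). 1 \<in># \<xi>} = add_mset 1 ` partitions_of k"
proof (intro equalityI subsetI)
  fix \<xi> assume "\<xi> \<in> {\<xi> \<in> partitions_of (Suc k). 1 \<in># \<xi>}"
  then have \<xi>: "is_partition \<xi> (Suc k)" "1 \<in># \<xi>" by (auto simp: partitions_of_def)
  define \<zeta> where "\<zeta> = \<xi> - {#1#}"
  have \<xi>_eq: "\<xi> = add_mset 1 \<zeta>" using \<xi>(2) by (simp add: \<zeta>_def)
  with \<xi>(1) have "\<zeta> \<in> partitions_of k" by (simp add: partitions_of_def is_partition_def)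
  with \<xi>_eq show "\<xi> \<in> add_mset 1 ` partitions_of k" by blast
qed (auto simp: partitions_of_def is_partition_def)

lemma card_partitions_with_one:
  "card {\<xi> \<in> partitions_of (Suc k). 1 \<in># \<xi>} = npart k"
  unfolding partitions_with_one by (simp add: npart_def card_image inj_on_def)

lemma npart_le_Suc: "npart k \<le> npart (Suc k)"
  unfolding card_partitions_with_one[of k, symmetric]
  by (simp add: npart_def card_mono finite_partitions_of)

lemma npart_mono: "a \<le> b \<Longrightarrow> npart a \<le> npart b"
  by (induction b rule: dec_induct) (auto intro: le_trans npart_le_Suc)

lemma npart_pos: "0 < npart k"
  using npart_mono[of 0 k] by (simp add: npart_values)

text \<open>Partitions of \<open>k + 2\<close> without a part \<open>1\<close> inject into the partitions of \<open>k\<close>: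
  replace the smallest part \<open>s \<ge> 2\<close> by \<open>s - 2\<close> parts \<open>1\<close>.  The number of parts \<open>1\<close> of
  the image recovers \<open>s\<close>, hence the map is injective.\<close>
lemma card_partitions_without_one:
  "card {\<xi> \<in> partitions_of (Suc (Suc k)). 1 \<notin># \<xi>} \<le> npart k"
proof -
  define W where "W = {\<xi> \<in> partitions_of (Suc (Suc k)). 1 \<notin># \<xi>}"
  define s :: "nat multiset \<Rightarrow> nat" where "s \<xi> = Min (set_mset \<xi>)" for \<xi>
  define f where "f \<xi> = (\<xi> - {#s \<xi>#}) + replicate_mset (s \<xi> - 2) 1" for \<xi>
  have s_props: "s \<xi> \<in># \<xi>" "2 \<le> s \<xi>" "count \<xi> 1 = 0" if "\<xi> \<in> W" for \<xi>
  proof -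
    from that have "\<xi> \<noteq> {#}" "\<forall>x\<in>#\<xi>. 0 < x \<and> x \<noteq> 1" "count \<xi> 1 = 0"
      by (auto simp: W_def partitions_of_def is_partition_def count_eq_zero_iff)
    then show "s \<xi> \<in># \<xi>" "2 \<le> s \<xi>" "count \<xi> 1 = 0"
      unfolding s_def by (auto intro!: Min_in)
  qed
  have "f \<xi> \<in> partitions_of k" if "\<xi> \<in> W" for \<xi>
  proof -
    have sum: "sum_mset \<xi> = Suc (Suc k)" and pos: "\<forall>x\<in>#\<xi>. 0 < x"
      using that by (auto simp: W_def partitions_of_def is_partition_def)
    have split: "\<xi> = add_mset (s \<xi>) (\<xi> - {#s \<xi>#})" using s_props(1)[OF that] by simp
    have "s \<xi> + sum_mset (\<xi> - {#s \<xi>#}) = Suc (Suc k)"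
      using sum by (subst (asm) split) simp
    then have "sum_mset (f \<xi>) = k" using s_props(2)[OF that] by (simp add: f_def)
    moreover have "\<forall>x\<in>#f \<xi>. 0 < x" using pos by (auto simp: f_def dest: in_diffD)
    ultimately show ?thesis by (simp add: partitions_of_def is_partition_def)
  qed
  moreover have "inj_on f W"
  proof (rule inj_onI)
    fix \<xi> \<eta> assume in_W: "\<xi> \<in> W" "\<eta> \<in> W" and eq: "f \<xi> = f \<eta>"
    have count_one: "count (f \<zeta>) 1 = s \<zeta> - 2" if "\<zeta> \<in> W" for \<zeta>
      using s_props[OF that] by (simp add: f_def)
    have "s \<xi> - 2 = s \<eta> - 2" using eq count_one[OF in_W(1)] count_one[OF in_W(2)] by simp
    then have same_s: "s \<xi> = s \<eta>" using s_props(2)[OF in_W(1)] s_props(2)[OF in_W(2)] by linarith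
    then have "\<xi> - {#s \<xi>#} = \<eta> - {#s \<eta>#}" using eq by (simp add: f_def)
    then show "\<xi> = \<eta>" using s_props(1)[OF in_W(1)] s_props(1)[OF in_W(2)] same_s
      by (metis insert_DiffM)
  qed
  ultimately have "card W \<le> card (partitions_of k)"
    by (intro card_inj_on_le[of f]) (auto simp: finite_partitions_of)
  then show ?thesis by (simp add: W_def npart_def)
qed

text \<open>Splitting by the presence of a part \<open>1\<close> gives the Fibonacci-type bound.\<close>
lemma npart_Suc_Suc_le: "npart (Suc (Suc k)) \<le> npart (Suc k) + npart k"
proof -
  let ?A = "partitions_of (Suc (Suc k))"
  have "npart (Suc (Suc k)) = card ({\<xi> \<in> ?A. 1 \<in># \<xi>} \<union> {\<xi> \<in> ?A. 1 \<notin># \<xi>})"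
    unfolding npart_def by (rule arg_cong[where f = card]) blast
  also have "\<dots> = card {\<xi> \<in> ?A. 1 \<in># \<xi>} + card {\<xi> \<in> ?A. 1 \<notin># \<xi>}"
    by (rule card_Un_disjoint) (auto simp: finite_partitions_of)
  finally show ?thesis
    using card_partitions_with_one[of "Suc k"] card_partitions_without_one[of k] by simp
qed

section \<open>Counting pairs of partitions\<close>

definition pair_count :: "nat \<Rightarrow> nat" where
  "pair_count n = (\<Sum>a\<le>n. npart a * npart (n - a))"

definition ordered_pairs :: "nat \<Rightarrow> (nat multiset \<times> nat multiset) set" where
  "ordered_pairs n = {(\<xi>, \<eta>). \<exists>a b. a + b = n \<and> is_partition \<xi> a \<and> is_partition \<eta> b}"

lemma ordered_pairs_UN:
  "ordered_pairs n = (\<Union>a\<le>n. partitions_of a \<times> partitions_of (n - a))"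
  by (force simp: ordered_pairs_def partitions_of_def)

lemma finite_ordered_pairs: "finite (ordered_pairs n)"
  by (simp add: ordered_pairs_UN finite_partitions_of)

lemma card_ordered_pairs: "card (ordered_pairs n) = pair_count n"
proof -
  have "card (ordered_pairs n) = (\<Sum>a\<le>n. card (partitions_of a \<times> partitions_of (n - a)))"
    unfolding ordered_pairs_UN
    by (rule card_UN_disjoint)
      (auto simp: finite_partitions_of, auto simp: partitions_of_def is_partition_def)
  then show ?thesis by (simp add: pair_count_def card_cartesian_product npart_def)
qed

lemma ordered_pairs_swap: "(\<xi>, \<eta>) \<in> ordered_pairs n \<Longrightarrow> (\<eta>, \<xi>) \<in> ordered_pairs n"
  unfolding ordered_pairs_def by (auto intro: add.commute)

definition diagonal_partitions :: "nat \<Rightarrow> nat multiset set" where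
  "diagonal_partitions n = {\<xi>. \<exists>a. a + a = n \<and> is_partition \<xi> a}"

definition diagonal_count :: "nat \<Rightarrow> nat" where
  "diagonal_count n = (if even n then npart (n div 2) else 0)"

lemma diagonal_partitions_eq:
  "diagonal_partitions n = (if even n then partitions_of (n div 2) else {})"
proof -
  have "a + a = n \<longleftrightarrow> even n \<and> a = n div 2" for a by presburger
  then show ?thesis by (auto simp: diagonal_partitions_def partitions_of_def)
qed

lemma card_diagonal_partitions: "card (diagonal_partitions n) = diagonal_count n"
  by (simp add: diagonal_partitions_eq diagonal_count_def npart_def)

definition unordered_pairs :: "nat \<Rightarrow> nat multiset set set" where
  "unordered_pairs n =
     {{\<xi>, \<eta>} | \<xi> \<eta>. \<exists>a b. a + b = n \<and> is_partition \<xi> a \<and> is_partition \<eta> b}"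

lemma Pcount_eq: "Pcount n = card (unordered_pairs n) + diagonal_count n"
  by (simp add: Pcount_def unordered_pairs_def diagonal_partitions_def[symmetric]
      card_diagonal_partitions)

lemma unordered_pairs_eq_image:
  "unordered_pairs n = (\<lambda>(\<xi>, \<eta>). {\<xi>, \<eta>}) ` {p \<in> ordered_pairs n. fst p \<le> snd p}"
proof (intro equalityI subsetI)
  fix u assume "u \<in> unordered_pairs n"
  then obtain \<xi> \<eta> where u: "u = {\<xi>, \<eta>}" and p: "(\<xi>, \<eta>) \<in> ordered_pairs n"
    unfolding unordered_pairs_def ordered_pairs_def by blast
  show "u \<in> (\<lambda>(\<xi>, \<eta>). {\<xi>, \<eta>}) ` {p \<in> ordered_pairs n. fst p \<le> snd p}"
  proof (cases "\<xi> \<le> \<eta>")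
    case True
    with u p show ?thesis by force
  next
    case False
    then have "\<eta> \<le> \<xi>" "u = {\<eta>, \<xi>}" using u by auto
    with ordered_pairs_swap[OF p] show ?thesis by force
  qed
qed (auto simp: unordered_pairs_def ordered_pairs_def)

text \<open>The swap exchanges the pairs below and above the diagonal, so the sorted pairs are
  half of the off-diagonal pairs plus the diagonal.\<close>
lemma card_sorted_pairs:
  "2 * card {p \<in> ordered_pairs n. fst p \<le> snd p} = pair_count n + diagonal_count n"
proof -
  define below where "below = {p \<in> ordered_pairs n. fst p < snd p}"
  define diag where "diag = {p \<in> ordered_pairs n. fst p = snd p}"
  define above where "above = {p \<in> ordered_pairs n. snd p < fst p}"
  have fin: "finite below" "finite diag" "finite above"
    using finite_ordered_pairs by (auto simp: below_def diag_def above_def)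
  have "above = prod.swap ` below"
    by (auto simp: above_def below_def ordered_pairs_swap image_iff
        intro!: exI[of _ "prod.swap _"])
  then have card_above: "card above = card below" by (simp add: card_image)
  have "diag = (\<lambda>\<xi>. (\<xi>, \<xi>)) ` diagonal_partitions n"
    by (auto simp: diag_def ordered_pairs_def diagonal_partitions_def is_partition_def)
  then have card_diag: "card diag = diagonal_count n"
    by (simp add: card_image inj_on_def card_diagonal_partitions)
  have card_sorted: "card (below \<union> diag) = card below + card diag"
    using fin by (intro card_Un_disjoint) (auto simp: below_def diag_def)
  have "ordered_pairs n = (below \<union> diag) \<union> above"
    unfolding below_def diag_def above_def using linorder_less_linear by blast
  moreover have "card ((below \<union> diag) \<union> above) = card (below \<union> diag) + card above"
    using fin by (intro card_Un_disjoint) (auto simp: below_def diag_def above_def)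
  ultimately have "pair_count n = card (below \<union> diag) + card above"
    by (simp add: card_ordered_pairs[symmetric])
  moreover have "{p \<in> ordered_pairs n. fst p \<le> snd p} = below \<union> diag"
    by (auto simp: below_def diag_def)
  ultimately show ?thesis using card_sorted card_above card_diag by simp
qed

lemma Pcount_bound: "2 * Pcount n \<le> pair_count n + 3 * diagonal_count n"
proof -
  have "card (unordered_pairs n) \<le> card {p \<in> ordered_pairs n. fst p \<le> snd p}"
    unfolding unordered_pairs_eq_image by (rule card_image_le) (simp add: finite_ordered_pairs)
  then show ?thesis using card_sorted_pairs[of n] by (simp add: Pcount_eq)
qed

section \<open>Growth of the pair count\<close>

text \<open>Split off the terms \<open>a = 0, 1\<close> of \<open>B(m + 2)\<close> and bound the rest with
  \<open>p(a + 2) \<le> p(a + 1) + p(a)\<close>.\<close>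
lemma pair_count_Suc_Suc_le:
  "pair_count (Suc (Suc m)) \<le> pair_count (Suc m) + pair_count m + npart (Suc (Suc m))"
proof -
  let ?T = "\<lambda>k. \<Sum>a\<le>k. npart (Suc a) * npart (k - a)"
  have B_Suc: "pair_count (Suc k) = npart (Suc k) + ?T k" for k
    unfolding pair_count_def sum.atMost_Suc_shift by (simp add: npart_values(1))
  have T_Suc: "?T (Suc m) = npart (Suc m) + (\<Sum>a\<le>m. npart (Suc (Suc a)) * npart (m - a))"
    unfolding sum.atMost_Suc_shift by (simp add: npart_Suc_0)
  have "(\<Sum>a\<le>m. npart (Suc (Suc a)) * npart (m - a))
      \<le> (\<Sum>a\<le>m. (npart (Suc a) + npart a) * npart (m - a))"
    by (intro sum_mono mult_right_mono npart_Suc_Suc_le) simp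
  also have "\<dots> = ?T m + pair_count m"
    by (simp add: pair_count_def sum.distrib algebra_simps)
  finally show ?thesis using B_Suc[of "Suc m"] B_Suc[of m] T_Suc by simp
qed

lemma pair_count_le_Suc: "pair_count m \<le> pair_count (Suc m)"
proof -
  have "pair_count m \<le> (\<Sum>a\<le>m. npart a * npart (Suc m - a))"
    unfolding pair_count_def
    by (intro sum_mono mult_left_mono) (simp_all add: Suc_diff_le npart_le_Suc)
  also have "\<dots> \<le> pair_count (Suc m)" by (simp add: pair_count_def)
  finally show ?thesis .
qed

definition pair_majorant :: "nat \<Rightarrow> nat" where
  "pair_majorant n = pair_count n + 8 * (npart n + npart (n - 1))"

lemma pair_majorant_step:
  assumes "2 \<le> m"
  shows "pair_majorant (Suc (Suc m)) \<le> 3 * pair_majorant m"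
proof -
  define j where "j = m - 2"
  have m: "m = Suc (Suc j)" using assms by (simp add: j_def)
  have "pair_count (Suc (Suc m)) \<le> pair_count (Suc m) + pair_count m + npart (Suc (Suc m))"
    "pair_count (Suc m) \<le> pair_count m + pair_count (Suc j) + npart (Suc m)"
    "pair_count (Suc j) \<le> pair_count m"
    using pair_count_Suc_Suc_le[of m] pair_count_Suc_Suc_le[of "Suc j"]
      pair_count_le_Suc[of "Suc j"] m by simp_all
  moreover have "npart (Suc (Suc m)) \<le> npart (Suc m) + npart m"
    "npart (Suc m) \<le> npart m + npart (Suc j)"
    "npart m \<le> npart (Suc j) + npart j"
    "npart j \<le> npart (Suc j)"
    using npart_Suc_Suc_le[of m] npart_Suc_Suc_le[of "Suc j"] npart_Suc_Suc_le[of j]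
      npart_le_Suc[of j] m by simp_all
  ultimately show ?thesis using m by (simp add: pair_majorant_def)
qed

lemma Dbound_step: "4 \<le> m \<Longrightarrow> Dbound (Suc (Suc m)) = 3 * Dbound m"
proof -
  assume m: "4 \<le> m"
  have "(Suc (Suc m) - 4) div 2 = Suc ((m - 4) div 2)" using m by simp
  moreover have "4 < m \<Longrightarrow> (Suc (Suc m) - 5) div 2 = Suc ((m - 5) div 2)" by simp
  moreover have "odd m \<Longrightarrow> 5 \<le> m" using m by (cases "m = 4") auto
  ultimately show ?thesis using m unfolding Dbound_def by (auto simp: le_less)
qed

text \<open>Two consecutive base cases for the induction in steps of two.\<close>
lemma pair_majorant_le_Dbound_base: "pair_majorant 15 \<le> Dbound 15" "pair_majorant 16 \<le> Dbound 16"
  by (simp_all add: pair_majorant_def pair_count_def atMost_nat_numeral npart_values npart_Suc_0 Dbound_def)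

lemma pair_majorant_le_Dbound: "15 \<le> n \<Longrightarrow> pair_majorant n \<le> Dbound n"
proof (induction n rule: less_induct)
  case (less n)
  show ?case
  proof (cases "n \<le> 16")
    case True
    then have "n = 15 \<or> n = 16" using less.prems by auto
    then show ?thesis using pair_majorant_le_Dbound_base by auto
  next
    case False
    define m where "m = n - 2"
    have n: "n = Suc (Suc m)" and m: "15 \<le> m" using False by (simp_all add: m_def)
    have "pair_majorant n \<le> 3 * pair_majorant m" using pair_majorant_step[of m] n m by simp
    also have "\<dots> \<le> 3 * Dbound m" using less.IH[of m] n m by simp
    also have "\<dots> = Dbound n" using Dbound_step[of m] n m by simp
    finally show ?thesis .
  qed
qed

text \<open>The theorem for \<open>4 \<le> n \<le> 14\<close>, where the growth argument is too weak, by
  direct evaluation of the counting bound.\<close>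
lemma small_cases: "4 \<le> n \<Longrightarrow> n \<le> 14 \<Longrightarrow> pair_count n + 3 * diagonal_count n < 2 * Dbound n"
proof -
  assume "4 \<le> n" "n \<le> 14"
  then have "n \<in> set [4..<15]" unfolding set_upt by simp
  then show ?thesis
    by (auto simp: pair_count_def atMost_nat_numeral npart_values npart_Suc_0 diagonal_count_def Dbound_def)
qed

theorem mainTheorem12:
  fixes n :: nat
  assumes "n \<ge> 4"
  shows "Dbound n > Pcount n"
proof (cases "n \<le> 14")
  case True
  then show ?thesis using small_cases[OF assms True] Pcount_bound[of n] by simp
next
  case False
  have "diagonal_count n \<le> npart n"
    unfolding diagonal_count_def using npart_mono[of "n div 2" n] by simp
  then have "2 * Pcount n < pair_majorant n"
    using Pcount_bound[of n] npart_pos[of n] by (simp add: pair_majorant_def)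
  also have "\<dots> \<le> Dbound n" using False by (intro pair_majorant_le_Dbound) simp
  finally show ?thesis by simp
qed

end
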